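(* If $\Gamma\vdash_{TTR}t:A$, then $\Gamma^\diamond\vdash_{TTR^\diamond}t:A^\diamond$.
   Context: $TTR$: types over a second-order language (first-order variables, function symbols, $n$-ary predicate variables and predicate symbols) with a fixed system $\mathbf E$ of equations between first-order terms; atomic formulas $\perp$ and $X(t_1,\dots,t_n)$; constructors $A\to B$, $\forall xA$, $\forall XA$, and $\mu Cx_1\dots x_nA\langle t_1,\dots,t_n\rangle$ for an $n$-ary predicate symbol $C$ occurring and positive in $A$ (positivity defined in the usual way: $X$ positive in $X(\bar t)$, polarity flips on the left of $\to$, unchanged under $\forall$ and $\mu$, and a symbol not occurring is both positive and negative). Subtyping $\subseteq$ is generated by: reflexivity; $A\subseteq A',B\subseteq B'\Rightarrow A'\to B\subseteq A\to B'$; $A[G/v]\subseteq B\Rightarrow\forall vA\subseteq B$; $A\subseteq B\Rightarrow A\subseteq\forall vB$ ($v$ not free in $A$); $A\subseteq B[v/y]\Rightarrow A\subseteq B[w/y]$ for $v=w$ an instance of an equation of $\mathbf E$; transitivity; $D[\mu C\bar xD\langle\bar z\rangle/C(\bar z)][\bar t/\bar x]\subseteq\mu C\bar xD\langle\bar t\rangle$ and its converse; $D[E/C(\bar x)]\subseteq E\Rightarrow\mu C\bar xD\langle\bar t\rangle\subseteq E[\bar t/\bar x]$. Typing $\vdash_{TTR}$: variable axiom, $\to$-intro/elim, $\forall$-intro (variable not in context) and elimination for first- and second-order variables, equational rule for instances of $\mathbf E$, subsumption along $\subseteq$, and rule (Y): from $\Gamma\vdash t:\forall\bar x[C(\bar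 x)\to E]\to\forall\bar x[D\to E]$ infer $\Gamma\vdash(Y)t:\forall\bar x[\mu C\bar xD\langle\bar x\rangle\to E]$ ($C$ not free in $E$ nor in $\Gamma$; $Y$ Turing's fixed point combinator). $TTR^\diamond$ is the subsystem of $TTR$ in which all predicate variables and predicate symbols are 0-ary (so there are no first-order variables, function symbols or equations). With each predicate variable (resp. symbol) $X$ of $TTR$ one associates a 0-ary predicate variable (resp. symbol) $X^\diamond$; for a $TTR$ formula $A$, $A^\diamond$ is obtained by forgetting the first-order part (each $X(t_1,\dots,t_n)$ becomes $X^\diamond$, first-order quantifiers are dropped, $\mu C\bar xA\langle\bar t\rangle$ becomes $\mu C^\diamond A^\diamond$). For $\Gamma=x_1:A_1,\dots,x_n:A_n$, $\Gamma^\diamond=x_1:A_1^\diamond,\dots,x_n:A_n^\diamond$. *)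

theory Defs
  imports Main "HOL-Library.Nat_Bijection"
begin

datatype lterm = Var nat | Lam lterm | App lterm lterm

text \<open>Turing's fixed point combinator: (\<lambda>x y. y (x x y)) (\<lambda>x y. y (x x y)).\<close>
definition TuringA :: lterm where
  "TuringA = Lam (Lam (App (Var 0) (App (App (Var 1) (Var 1)) (Var 0))))"

definition TuringY :: lterm where
  "TuringY = App TuringA TuringA"

section \<open>TTR: first-order terms and second-order formulas (de Bruijn)\<close>

datatype trm = V nat | Fn nat "trm list"

fun tsub :: "(nat \<Rightarrow> trm) \<Rightarrow> trm \<Rightarrow> trm" where
  "tsub \<sigma> (V i) = \<sigma> i"
| "tsub \<sigma> (Fn f ts) = Fn f (map (tsub \<sigma>) ts)"

text \<open>A predicate variable (resp. symbol) is identified by its arity n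
  together with an index k; each arity has its own de Bruijn name space, and the
  arity of an occurrence PV k ts is length ts.
  AllF A: first-order quantifier (binds first-order index 0).
  AllP n A: quantifier over n-ary predicate variables (binds index 0 of arity n).
  Mu D ts: \<mu>C x1..xn D\<langle>t1..tn\<rangle> with n = length ts; it binds the
  n-ary predicate symbol with index 0 (this is C) and the first-order indices
  0..n-1 in D, index i standing for x_(n-i).\<close>
datatype form = Bot | PV nat "trm list" | PS nat "trm list" | Imp form form
  | AllF form | AllP nat form | Mu form "trm list"

text \<open>The arguments x1..xn (as terms in a context where they are the n innermost variables).\<close>
definition args :: "nat \<Rightarrow> trm list" where
  "args n = map V (rev [0..<n])"

text \<open>Instantiation of the n innermost variables x1..xn by t1..tn.\<close>
definition inst :: "trm list \<Rightarrow> nat \<Rightarrow> trm" where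
  "inst ts = (\<lambda>i. if i < length ts then rev ts ! i else V (i - length ts))"

definition upT :: "nat \<Rightarrow> (nat \<Rightarrow> trm) \<Rightarrow> nat \<Rightarrow> trm" where
  "upT m \<sigma> = (\<lambda>i. if i < m then V i else tsub (\<lambda>j. V (j + m)) (\<sigma> (i - m)))"

primrec fsub :: "(nat \<Rightarrow> trm) \<Rightarrow> form \<Rightarrow> form" where
  "fsub \<sigma> Bot = Bot"
| "fsub \<sigma> (PV k ts) = PV k (map (tsub \<sigma>) ts)"
| "fsub \<sigma> (PS k ts) = PS k (map (tsub \<sigma>) ts)"
| "fsub \<sigma> (Imp A B) = Imp (fsub \<sigma> A) (fsub \<sigma> B)"
| "fsub \<sigma> (AllF A) = AllF (fsub (upT 1 \<sigma>) A)"
| "fsub \<sigma> (AllP n A) = AllP n (fsub \<sigma> A)"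
| "fsub \<sigma> (Mu D ts) = Mu (fsub (upT (length ts) \<sigma>) D) (map (tsub \<sigma>) ts)"

definition liftD :: "nat \<Rightarrow> nat \<Rightarrow> form \<Rightarrow> form" where
  "liftD m n A = fsub (\<lambda>i. if i < n then V i else V (i + m)) A"

text \<open>Renamings of second-order names (arity \<Rightarrow> index \<Rightarrow> index).\<close>
definition upR :: "nat \<Rightarrow> (nat \<Rightarrow> nat \<Rightarrow> nat) \<Rightarrow> nat \<Rightarrow> nat \<Rightarrow> nat" where
  "upR n r = (\<lambda>m k. if m = n then (case k of 0 \<Rightarrow> 0 | Suc j \<Rightarrow> Suc (r m j)) else r m k)"

definition liftR :: "nat \<Rightarrow> nat \<Rightarrow> nat \<Rightarrow> nat" where
  "liftR n = (\<lambda>m k. if m = n then Suc k else k)"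

primrec renP :: "(nat \<Rightarrow> nat \<Rightarrow> nat) \<Rightarrow> form \<Rightarrow> form" where
  "renP r Bot = Bot"
| "renP r (PV k ts) = PV (r (length ts) k) ts"
| "renP r (PS k ts) = PS k ts"
| "renP r (Imp A B) = Imp (renP r A) (renP r B)"
| "renP r (AllF A) = AllF (renP r A)"
| "renP r (AllP n A) = AllP n (renP (upR n r) A)"
| "renP r (Mu D ts) = Mu (renP r D) ts"

primrec renS :: "(nat \<Rightarrow> nat \<Rightarrow> nat) \<Rightarrow> form \<Rightarrow> form" where
  "renS r Bot = Bot"
| "renS r (PV k ts) = PV k ts"
| "renS r (PS k ts) = PS (r (length ts) k) ts"
| "renS r (Imp A B) = Imp (renS r A) (renS r B)"
| "renS r (AllF A) = AllF (renS r A)"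
| "renS r (AllP n A) = AllP n (renS r A)"
| "renS r (Mu D ts) = Mu (renS (upR (length ts) r) D) ts"

text \<open>Second-order substitutions map (arity n, index k) to an abstraction
  \<lambda>z1..zn. G, represented by a formula G whose first-order indices
  0..n-1 are z_n..z_1 and whose other indices i refer to the ambient variable i-n.\<close>
definition liftAbs :: "nat \<Rightarrow> (nat \<Rightarrow> nat \<Rightarrow> form) \<Rightarrow> nat \<Rightarrow> nat \<Rightarrow> form" where
  "liftAbs m \<theta> = (\<lambda>n k. liftD m n (\<theta> n k))"

definition upP :: "nat \<Rightarrow> (nat \<Rightarrow> nat \<Rightarrow> form) \<Rightarrow> nat \<Rightarrow> nat \<Rightarrow> form" where
  "upP n \<theta> = (\<lambda>m k. if m = n then (case k of 0 \<Rightarrow> PV 0 (args m)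
                                       | Suc j \<Rightarrow> renP (liftR n) (\<theta> m j))
                   else renP (liftR n) (\<theta> m k))"

definition upS :: "nat \<Rightarrow> (nat \<Rightarrow> nat \<Rightarrow> form) \<Rightarrow> nat \<Rightarrow> nat \<Rightarrow> form" where
  "upS n \<theta> = (\<lambda>m k. if m = n then (case k of 0 \<Rightarrow> PS 0 (args m)
                                       | Suc j \<Rightarrow> renS (liftR n) (\<theta> m j))
                   else renS (liftR n) (\<theta> m k))"

primrec psub :: "(nat \<Rightarrow> nat \<Rightarrow> form) \<Rightarrow> form \<Rightarrow> form" where
  "psub \<theta> Bot = Bot"
| "psub \<theta> (PV k ts) = fsub (inst ts) (\<theta> (length ts) k)"
| "psub \<theta> (PS k ts) = PS k ts"
| "psub \<theta> (Imp A B) = Imp (psub \<theta> A) (psub \<theta> B)"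
| "psub \<theta> (AllF A) = AllF (psub (liftAbs 1 \<theta>) A)"
| "psub \<theta> (AllP n A) = AllP n (psub (upP n \<theta>) A)"
| "psub \<theta> (Mu D ts) =
     Mu (psub (\<lambda>m k. renS (liftR (length ts)) (liftAbs (length ts) \<theta> m k)) D) ts"

primrec ssub :: "(nat \<Rightarrow> nat \<Rightarrow> form) \<Rightarrow> form \<Rightarrow> form" where
  "ssub \<theta> Bot = Bot"
| "ssub \<theta> (PV k ts) = PV k ts"
| "ssub \<theta> (PS k ts) = fsub (inst ts) (\<theta> (length ts) k)"
| "ssub \<theta> (Imp A B) = Imp (ssub \<theta> A) (ssub \<theta> B)"
| "ssub \<theta> (AllF A) = AllF (ssub (liftAbs 1 \<theta>) A)"
| "ssub \<theta> (AllP n A) = AllP n (ssub (\<lambda>m k. renP (liftR n) (\<theta> m k)) A)"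
| "ssub \<theta> (Mu D ts) = Mu (ssub (upS (length ts) (liftAbs (length ts) \<theta>)) D) ts"

definition substP1 :: "nat \<Rightarrow> form \<Rightarrow> nat \<Rightarrow> nat \<Rightarrow> form" where
  "substP1 n G = (\<lambda>m k. if m = n then (case k of 0 \<Rightarrow> G | Suc j \<Rightarrow> PV j (args m))
                        else PV k (args m))"

definition substS1 :: "nat \<Rightarrow> form \<Rightarrow> nat \<Rightarrow> nat \<Rightarrow> form" where
  "substS1 n G = (\<lambda>m k. if m = n then (case k of 0 \<Rightarrow> G | Suc j \<Rightarrow> PS j (args m))
                        else PS k (args m))"

primrec occS :: "nat \<Rightarrow> nat \<Rightarrow> form \<Rightarrow> bool" where
  "occS n k Bot = False"
| "occS n k (PV j ts) = False"
| "occS n k (PS j ts) = (j = k \<and> length ts = n)"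
| "occS n k (Imp A B) = (occS n k A \<or> occS n k B)"
| "occS n k (AllF A) = occS n k A"
| "occS n k (AllP m A) = occS n k A"
| "occS n k (Mu D ts) = occS n (if length ts = n then Suc k else k) D"

primrec polS :: "nat \<Rightarrow> nat \<Rightarrow> bool \<Rightarrow> form \<Rightarrow> bool" where
  "polS n k b Bot = True"
| "polS n k b (PV j ts) = True"
| "polS n k b (PS j ts) = ((j = k \<and> length ts = n) \<longrightarrow> b)"
| "polS n k b (Imp A B) = (polS n k (\<not> b) A \<and> polS n k b B)"
| "polS n k b (AllF A) = polS n k b A"
| "polS n k b (AllP m A) = polS n k b A"
| "polS n k b (Mu D ts) = polS n (if length ts = n then Suc k else k) b D"

primrec wf :: "form \<Rightarrow> bool" where
  "wf Bot = True"
| "wf (PV k ts) = True"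
| "wf (PS k ts) = True"
| "wf (Imp A B) = (wf A \<and> wf B)"
| "wf (AllF A) = wf A"
| "wf (AllP n A) = wf A"
| "wf (Mu D ts) = (occS (length ts) 0 D \<and> polS (length ts) 0 True D \<and> wf D)"

definition liftFO :: "form \<Rightarrow> form" where
  "liftFO A = fsub (\<lambda>i. V (Suc i)) A"

definition allFn :: "nat \<Rightarrow> form \<Rightarrow> form" where
  "allFn n A = (AllF ^^ n) A"

text \<open>D[\<mu>C x1..xn D\<langle>z\<rangle>/C(z)][t/x]\<close>
definition unfold :: "form \<Rightarrow> trm list \<Rightarrow> form" where
  "unfold D ts = (let n = length ts in
     fsub (inst ts) (ssub (substS1 n (Mu (liftD (2 * n) n D) (args n))) D))"

definition eq_inst :: "(trm \<times> trm) set \<Rightarrow> trm \<Rightarrow> trm \<Rightarrow> bool" where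
  "eq_inst Eq v w = (\<exists>l r \<sigma>. (l, r) \<in> Eq \<and> v = tsub \<sigma> l \<and> w = tsub \<sigma> r)"

inductive ttr_sub :: "(trm \<times> trm) set \<Rightarrow> form \<Rightarrow> form \<Rightarrow> bool" for Eq where
  refl: "wf A \<Longrightarrow> ttr_sub Eq A A"
| arrow: "ttr_sub Eq A A' \<Longrightarrow> ttr_sub Eq B B' \<Longrightarrow> ttr_sub Eq (Imp A' B) (Imp A B')"
| allF_L: "ttr_sub Eq (fsub (inst [u]) A) B \<Longrightarrow> wf (AllF A) \<Longrightarrow> ttr_sub Eq (AllF A) B"
| allP_L: "ttr_sub Eq (psub (substP1 n G) A) B \<Longrightarrow> wf G \<Longrightarrow> wf (AllP n A)
           \<Longrightarrow> ttr_sub Eq (AllP n A) B"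
| allF_R: "ttr_sub Eq (liftFO A) B \<Longrightarrow> ttr_sub Eq A (AllF B)"
| allP_R: "ttr_sub Eq (renP (liftR n) A) B \<Longrightarrow> ttr_sub Eq A (AllP n B)"
| eq: "ttr_sub Eq A (fsub (inst [v]) B) \<Longrightarrow> eq_inst Eq v w
       \<Longrightarrow> ttr_sub Eq A (fsub (inst [w]) B)"
| trans: "ttr_sub Eq A B \<Longrightarrow> ttr_sub Eq B C \<Longrightarrow> ttr_sub Eq A C"
| mu_fold: "wf (Mu D ts) \<Longrightarrow> ttr_sub Eq (unfold D ts) (Mu D ts)"
| mu_unfold: "wf (Mu D ts) \<Longrightarrow> ttr_sub Eq (Mu D ts) (unfold D ts)"
| mu_ind: "ttr_sub Eq (ssub (substS1 (length ts) (liftD (length ts) (length ts) F)) D) F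
           \<Longrightarrow> wf (Mu D ts) \<Longrightarrow> ttr_sub Eq (Mu D ts) (fsub (inst ts) F)"

inductive ttr_ty :: "(trm \<times> trm) set \<Rightarrow> form list \<Rightarrow> lterm \<Rightarrow> form \<Rightarrow> bool" for Eq where
  var: "i < length \<Gamma> \<Longrightarrow> \<forall>A\<in>set \<Gamma>. wf A \<Longrightarrow> ttr_ty Eq \<Gamma> (Var i) (\<Gamma> ! i)"
| lam: "ttr_ty Eq (A # \<Gamma>) t B \<Longrightarrow> ttr_ty Eq \<Gamma> (Lam t) (Imp A B)"
| app: "ttr_ty Eq \<Gamma> t (Imp A B) \<Longrightarrow> ttr_ty Eq \<Gamma> u A \<Longrightarrow> ttr_ty Eq \<Gamma> (App t u) B"
| allF_I: "ttr_ty Eq (map liftFO \<Gamma>) t A \<Longrightarrow> ttr_ty Eq \<Gamma> t (AllF A)"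
| allP_I: "ttr_ty Eq (map (renP (liftR n)) \<Gamma>) t A \<Longrightarrow> ttr_ty Eq \<Gamma> t (AllP n A)"
| allF_E: "ttr_ty Eq \<Gamma> t (AllF A) \<Longrightarrow> ttr_ty Eq \<Gamma> t (fsub (inst [u]) A)"
| allP_E: "ttr_ty Eq \<Gamma> t (AllP n A) \<Longrightarrow> wf G \<Longrightarrow> ttr_ty Eq \<Gamma> t (psub (substP1 n G) A)"
| eq: "ttr_ty Eq \<Gamma> t (fsub (inst [v]) A) \<Longrightarrow> eq_inst Eq v w
       \<Longrightarrow> ttr_ty Eq \<Gamma> t (fsub (inst [w]) A)"
| sub: "ttr_ty Eq \<Gamma> t A \<Longrightarrow> ttr_sub Eq A B \<Longrightarrow> ttr_ty Eq \<Gamma> t B"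
| Y: "ttr_ty Eq (map (renS (liftR n)) \<Gamma>) t
        (Imp (allFn n (Imp (PS 0 (args n)) (renS (liftR n) F)))
             (allFn n (Imp D (renS (liftR n) F))))
      \<Longrightarrow> wf (Mu (liftD n n D) (args n))
      \<Longrightarrow> ttr_ty Eq \<Gamma> (App TuringY t) (allFn n (Imp (Mu (liftD n n D) (args n)) F))"

section \<open>TTR\<diamond>: the 0-ary subsystem\<close>

text \<open>All predicate variables/symbols 0-ary; no first-order part.
  DAll binds variable index 0, DMu binds symbol index 0.\<close>
datatype dform = DBot | DV nat | DS nat | DImp dform dform | DAll dform | DMu dform

definition upN :: "(nat \<Rightarrow> nat) \<Rightarrow> nat \<Rightarrow> nat" where
  "upN r = (\<lambda>k. case k of 0 \<Rightarrow> 0 | Suc j \<Rightarrow> Suc (r j))"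

primrec drenV :: "(nat \<Rightarrow> nat) \<Rightarrow> dform \<Rightarrow> dform" where
  "drenV r DBot = DBot"
| "drenV r (DV k) = DV (r k)"
| "drenV r (DS k) = DS k"
| "drenV r (DImp A B) = DImp (drenV r A) (drenV r B)"
| "drenV r (DAll A) = DAll (drenV (upN r) A)"
| "drenV r (DMu A) = DMu (drenV r A)"

primrec drenS :: "(nat \<Rightarrow> nat) \<Rightarrow> dform \<Rightarrow> dform" where
  "drenS r DBot = DBot"
| "drenS r (DV k) = DV k"
| "drenS r (DS k) = DS (r k)"
| "drenS r (DImp A B) = DImp (drenS r A) (drenS r B)"
| "drenS r (DAll A) = DAll (drenS r A)"
| "drenS r (DMu A) = DMu (drenS (upN r) A)"

primrec dsubV :: "(nat \<Rightarrow> dform) \<Rightarrow> dform \<Rightarrow> dform" where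
  "dsubV \<sigma> DBot = DBot"
| "dsubV \<sigma> (DV k) = \<sigma> k"
| "dsubV \<sigma> (DS k) = DS k"
| "dsubV \<sigma> (DImp A B) = DImp (dsubV \<sigma> A) (dsubV \<sigma> B)"
| "dsubV \<sigma> (DAll A) = DAll (dsubV (\<lambda>k. case k of 0 \<Rightarrow> DV 0 | Suc j \<Rightarrow> drenV Suc (\<sigma> j)) A)"
| "dsubV \<sigma> (DMu A) = DMu (dsubV (\<lambda>k. drenS Suc (\<sigma> k)) A)"

primrec dsubS :: "(nat \<Rightarrow> dform) \<Rightarrow> dform \<Rightarrow> dform" where
  "dsubS \<sigma> DBot = DBot"
| "dsubS \<sigma> (DV k) = DV k"
| "dsubS \<sigma> (DS k) = \<sigma> k"
| "dsubS \<sigma> (DImp A B) = DImp (dsubS \<sigma> A) (dsubS \<sigma> B)"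
| "dsubS \<sigma> (DAll A) = DAll (dsubS (\<lambda>k. drenV Suc (\<sigma> k)) A)"
| "dsubS \<sigma> (DMu A) = DMu (dsubS (\<lambda>k. case k of 0 \<Rightarrow> DS 0 | Suc j \<Rightarrow> drenS Suc (\<sigma> j)) A)"

definition dsubst1V :: "dform \<Rightarrow> nat \<Rightarrow> dform" where
  "dsubst1V G = (\<lambda>k. case k of 0 \<Rightarrow> G | Suc j \<Rightarrow> DV j)"

definition dsubst1S :: "dform \<Rightarrow> nat \<Rightarrow> dform" where
  "dsubst1S G = (\<lambda>k. case k of 0 \<Rightarrow> G | Suc j \<Rightarrow> DS j)"

primrec doccS :: "nat \<Rightarrow> dform \<Rightarrow> bool" where
  "doccS k DBot = False"
| "doccS k (DV j) = False"
| "doccS k (DS j) = (j = k)"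
| "doccS k (DImp A B) = (doccS k A \<or> doccS k B)"
| "doccS k (DAll A) = doccS k A"
| "doccS k (DMu A) = doccS (Suc k) A"

primrec dpolS :: "nat \<Rightarrow> bool \<Rightarrow> dform \<Rightarrow> bool" where
  "dpolS k b DBot = True"
| "dpolS k b (DV j) = True"
| "dpolS k b (DS j) = (j = k \<longrightarrow> b)"
| "dpolS k b (DImp A B) = (dpolS k (\<not> b) A \<and> dpolS k b B)"
| "dpolS k b (DAll A) = dpolS k b A"
| "dpolS k b (DMu A) = dpolS (Suc k) b A"

primrec dwf :: "dform \<Rightarrow> bool" where
  "dwf DBot = True"
| "dwf (DV k) = True"
| "dwf (DS k) = True"
| "dwf (DImp A B) = (dwf A \<and> dwf B)"
| "dwf (DAll A) = dwf A"
| "dwf (DMu A) = (doccS 0 A \<and> dpolS 0 True A \<and> dwf A)"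

inductive d_sub :: "dform \<Rightarrow> dform \<Rightarrow> bool" where
  refl: "dwf A \<Longrightarrow> d_sub A A"
| arrow: "d_sub A A' \<Longrightarrow> d_sub B B' \<Longrightarrow> d_sub (DImp A' B) (DImp A B')"
| all_L: "d_sub (dsubV (dsubst1V G) A) B \<Longrightarrow> dwf G \<Longrightarrow> dwf (DAll A) \<Longrightarrow> d_sub (DAll A) B"
| all_R: "d_sub (drenV Suc A) B \<Longrightarrow> d_sub A (DAll B)"
| trans: "d_sub A B \<Longrightarrow> d_sub B C \<Longrightarrow> d_sub A C"
| mu_fold: "dwf (DMu D) \<Longrightarrow> d_sub (dsubS (dsubst1S (DMu D)) D) (DMu D)"
| mu_unfold: "dwf (DMu D) \<Longrightarrow> d_sub (DMu D) (dsubS (dsubst1S (DMu D)) D)"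
| mu_ind: "d_sub (dsubS (dsubst1S F) D) F \<Longrightarrow> dwf (DMu D) \<Longrightarrow> d_sub (DMu D) F"

inductive d_ty :: "dform list \<Rightarrow> lterm \<Rightarrow> dform \<Rightarrow> bool" where
  var: "i < length \<Gamma> \<Longrightarrow> \<forall>A\<in>set \<Gamma>. dwf A \<Longrightarrow> d_ty \<Gamma> (Var i) (\<Gamma> ! i)"
| lam: "d_ty (A # \<Gamma>) t B \<Longrightarrow> d_ty \<Gamma> (Lam t) (DImp A B)"
| app: "d_ty \<Gamma> t (DImp A B) \<Longrightarrow> d_ty \<Gamma> u A \<Longrightarrow> d_ty \<Gamma> (App t u) B"
| all_I: "d_ty (map (drenV Suc) \<Gamma>) t A \<Longrightarrow> d_ty \<Gamma> t (DAll A)"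
| all_E: "d_ty \<Gamma> t (DAll A) \<Longrightarrow> dwf G \<Longrightarrow> d_ty \<Gamma> t (dsubV (dsubst1V G) A)"
| sub: "d_ty \<Gamma> t A \<Longrightarrow> d_sub A B \<Longrightarrow> d_ty \<Gamma> t B"
| Y: "d_ty (map (drenS Suc) \<Gamma>) t
        (DImp (DImp (DS 0) (drenS Suc F)) (DImp D (drenS Suc F)))
      \<Longrightarrow> dwf (DMu D)
      \<Longrightarrow> d_ty \<Gamma> (App TuringY t) (DImp (DMu D) F)"

section \<open>The forgetful translation (-)\<diamond>\<close>

text \<open>Environments: (arity, de Bruijn index) of a TTR name \<mapsto> de Bruijn index in TTR\<diamond>.\<close>
definition bindenv :: "nat \<Rightarrow> (nat \<Rightarrow> nat \<Rightarrow> nat) \<Rightarrow> nat \<Rightarrow> nat \<Rightarrow> nat" where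
  "bindenv n e = (\<lambda>m k. if m = n then (case k of 0 \<Rightarrow> 0 | Suc j \<Rightarrow> Suc (e m j))
                         else Suc (e m k))"

primrec dia :: "(nat \<Rightarrow> nat \<Rightarrow> nat) \<Rightarrow> (nat \<Rightarrow> nat \<Rightarrow> nat) \<Rightarrow> form \<Rightarrow> dform" where
  "dia ev es Bot = DBot"
| "dia ev es (PV k ts) = DV (ev (length ts) k)"
| "dia ev es (PS k ts) = DS (es (length ts) k)"
| "dia ev es (Imp A B) = DImp (dia ev es A) (dia ev es B)"
| "dia ev es (AllF A) = dia ev es A"
| "dia ev es (AllP n A) = DAll (dia (bindenv n ev) es A)"
| "dia ev es (Mu D ts) = DMu (dia ev (bindenv (length ts) es) D)"

text \<open>Free n-ary name with index k is sent to the 0-ary name with index prod_encode (n,k)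
  (an injective association X \<mapsto> X\<diamond>).\<close>
definition diamond :: "form \<Rightarrow> dform" where
  "diamond A = dia (\<lambda>n k. prod_encode (n, k)) (\<lambda>n k. prod_encode (n, k)) A"

end

theory Submission
  imports Defs
begin

text \<open>The forgetful translation erases first-order terms and quantifiers and sends the
  binders \<open>\<forall>X\<close> and \<open>\<mu>C\<close> to their 0-ary counterparts. It is therefore compositional:
  first-order substitutions and equations become invisible, renamings and substitutions of
  predicate variables and symbols become the corresponding 0-ary ones, and unfolding a
  \<open>\<mu>\<close>-type is translated to unfolding its image. Every subtyping and typing rule of TTR
  is thus mapped to an instance of the same rule of TTR\<open>\<diamond>\<close>, and the theorem follows by
  induction on derivations. Free names may be sent to arbitrary 0-ary names, except that
  distinct predicate symbols must stay distinct: otherwise a free symbol could be identified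
  with a bound \<open>\<mu>\<close>-symbol and break its positivity.\<close>

lemma dia_fsub [simp]: "dia ev es (fsub \<sigma> A) = dia ev es A"
  by (induction A arbitrary: \<sigma> ev es) auto

lemma dia_allFn [simp]: "dia ev es (allFn n A) = dia ev es A"
  by (induction n) (auto simp: allFn_def)

lemma dia_liftD [simp]: "dia ev es (liftD m n A) = dia ev es A"
  by (simp add: liftD_def)

lemma dia_liftFO [simp]: "dia ev es (liftFO A) = dia ev es A"
  by (simp add: liftFO_def)

lemma bindenv_same_0 [simp]: "bindenv n e n 0 = 0"
  by (simp add: bindenv_def)

lemma bindenv_same_Suc [simp]: "bindenv n e n (Suc j) = Suc (e n j)"
  by (simp add: bindenv_def)

lemma bindenv_other [simp]: "m \<noteq> n \<Longrightarrow> bindenv n e m k = Suc (e m k)"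
  by (simp add: bindenv_def)

lemma bindenv_comp_upR:
  "(\<lambda>m k. bindenv n e m (upR n r m k)) = bindenv n (\<lambda>m k. e m (r m k))"
  by (auto simp: bindenv_def upR_def fun_eq_iff split: nat.split)

lemma upN_comp_bindenv:
  "(\<lambda>m k. upN r (bindenv n e m k)) = bindenv n (\<lambda>m k. r (e m k))"
  by (auto simp: bindenv_def upN_def fun_eq_iff split: nat.split)

lemma bindenv_comp_liftR: "(\<lambda>m k. bindenv n e m (liftR n m k)) = (\<lambda>m k. Suc (e m k))"
  by (auto simp: bindenv_def liftR_def fun_eq_iff)

lemma dia_renP: "dia ev es (renP r A) = dia (\<lambda>m k. ev m (r m k)) es A"
  by (induction A arbitrary: ev es r) (simp_all add: bindenv_comp_upR)

lemma dia_renS: "dia ev es (renS r A) = dia ev (\<lambda>m k. es m (r m k)) A"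
  by (induction A arbitrary: ev es r) (simp_all add: bindenv_comp_upR)

lemma drenV_dia: "drenV r (dia ev es A) = dia (\<lambda>m k. r (ev m k)) es A"
  by (induction A arbitrary: ev es r) (simp_all add: upN_comp_bindenv)

lemma drenS_dia: "drenS r (dia ev es A) = dia ev (\<lambda>m k. r (es m k)) A"
  by (induction A arbitrary: ev es r) (simp_all add: upN_comp_bindenv)

lemma dia_renP_liftR: "dia (bindenv n ev) es (renP (liftR n) A) = drenV Suc (dia ev es A)"
  by (simp add: dia_renP drenV_dia bindenv_comp_liftR)

lemma dia_renS_liftR: "dia ev (bindenv n es) (renS (liftR n) A) = drenS Suc (dia ev es A)"
  by (simp add: dia_renS drenS_dia bindenv_comp_liftR)

lemma dia_psub:
  assumes "\<And>m k. dia ev' es (\<theta> m k) = \<sigma> (ev m k)"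
  shows "dia ev' es (psub \<theta> A) = dsubV \<sigma> (dia ev es A)"
  using assms
proof (induction A arbitrary: \<theta> ev ev' es \<sigma>)
  case (AllP n A)
  let ?\<sigma> = "\<lambda>k. case k of 0 \<Rightarrow> DV 0 | Suc j \<Rightarrow> drenV Suc (\<sigma> j)"
  have "dia (bindenv n ev') es (upP n \<theta> m k) = ?\<sigma> (bindenv n ev m k)" for m k
    using AllP.prems by (auto simp: upP_def dia_renP_liftR args_def split: nat.split)
  then have "dia (bindenv n ev') es (psub (upP n \<theta>) A) = dsubV ?\<sigma> (dia (bindenv n ev) es A)"
    by (rule AllP.IH)
  then show ?case by simp
next
  case (Mu D ts)
  have "dia ev' (bindenv (length ts) es) (renS (liftR (length ts)) (liftAbs (length ts) \<theta> m k))
          = drenS Suc (\<sigma> (ev m k))" for m k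
    using Mu.prems by (simp add: dia_renS_liftR liftAbs_def)
  then show ?case by (simp add: Mu.IH)
qed (simp_all add: liftAbs_def)

lemma dia_ssub:
  assumes "\<And>m k. dia ev es' (\<theta> m k) = \<sigma> (es m k)"
  shows "dia ev es' (ssub \<theta> A) = dsubS \<sigma> (dia ev es A)"
  using assms
proof (induction A arbitrary: \<theta> ev es es' \<sigma>)
  case (AllP n A)
  have "dia (bindenv n ev) es' (renP (liftR n) (\<theta> m k)) = drenV Suc (\<sigma> (es m k))" for m k
    using AllP.prems by (simp add: dia_renP_liftR)
  then show ?case by (simp add: AllP.IH)
next
  case (Mu D ts)
  let ?n = "length ts"
  let ?\<sigma> = "\<lambda>k. case k of 0 \<Rightarrow> DS 0 | Suc j \<Rightarrow> drenS Suc (\<sigma> j)"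
  have "dia ev (bindenv ?n es') (upS ?n (liftAbs ?n \<theta>) m k) = ?\<sigma> (bindenv ?n es m k)" for m k
    using Mu.prems
    by (auto simp: upS_def dia_renS_liftR liftAbs_def args_def split: nat.split)
  then have "dia ev (bindenv ?n es') (ssub (upS ?n (liftAbs ?n \<theta>)) D)
      = dsubS ?\<sigma> (dia ev (bindenv ?n es) D)"
    by (rule Mu.IH)
  then show ?case by simp
qed (simp_all add: liftAbs_def)

lemma dia_substP1: "dia ev es (substP1 n G m k) = dsubst1V (dia ev es G) (bindenv n ev m k)"
  by (auto simp: substP1_def dsubst1V_def bindenv_def args_def split: nat.split)

lemma dia_substS1: "dia ev es (substS1 n G m k) = dsubst1S (dia ev es G) (bindenv n es m k)"
  by (auto simp: substS1_def dsubst1S_def bindenv_def args_def split: nat.split)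

lemma dia_psub_substP1:
  "dia ev es (psub (substP1 n G) A) = dsubV (dsubst1V (dia ev es G)) (dia (bindenv n ev) es A)"
  by (rule dia_psub) (rule dia_substP1)

lemma dia_ssub_substS1:
  "dia ev es (ssub (substS1 n G) A) = dsubS (dsubst1S (dia ev es G)) (dia ev (bindenv n es) A)"
  by (rule dia_ssub) (rule dia_substS1)

lemma dia_unfold:
  "dia ev es (unfold D ts)
    = dsubS (dsubst1S (dia ev es (Mu D ts))) (dia ev (bindenv (length ts) es) D)"
  by (simp add: unfold_def Let_def dia_ssub_substS1 args_def)

lemma inj_bindenv:
  assumes "inj (case_prod e)"
  shows "inj (case_prod (bindenv n e))"
proof (rule injI, clarify)
  fix m k m' k'
  assume eq: "bindenv n e m k = bindenv n e m' k'"
  have e_eq: "a = a' \<and> c = c'" if "e a c = e a' c'" for a c a' c'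
    using injD[OF assms, of "(a, c)" "(a', c')"] that by simp
  show "m = m' \<and> k = k'"
  proof (cases "m = n"; cases "m' = n")
    assume "m = n" "m' = n"
    with eq show ?thesis by (cases k; cases k') (auto dest: e_eq)
  next
    assume "m = n" "m' \<noteq> n"
    with eq show ?thesis by (cases k) (auto dest: e_eq)
  next
    assume "m \<noteq> n" "m' = n"
    with eq show ?thesis by (cases k') (auto dest: e_eq)
  next
    assume "m \<noteq> n" "m' \<noteq> n"
    with eq show ?thesis by (auto dest: e_eq)
  qed
qed

lemma bindenv_shift: "bindenv l e n (if l = n then Suc k else k) = Suc (e n k)"
  by (auto simp: bindenv_def)

lemma doccS_dia: "occS n k A \<Longrightarrow> doccS (es n k) (dia ev es A)"
proof (induction A arbitrary: k ev es)
  case (Mu D ts)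
  then show ?case
    using Mu.IH[of "if length ts = n then Suc k else k" "bindenv (length ts) es"]
    by (simp add: bindenv_shift)
qed auto

lemma dpolS_dia: "polS n k b A \<Longrightarrow> inj (case_prod es) \<Longrightarrow> dpolS (es n k) b (dia ev es A)"
proof (induction A arbitrary: k es ev b)
  case (PS j ts)
  then show ?case using injD[OF PS.prems(2), of "(length ts, j)" "(n, k)"] by auto
next
  case (Mu D ts)
  then show ?case
    using Mu.IH[of "if length ts = n then Suc k else k" b "bindenv (length ts) es"]
    by (simp add: bindenv_shift inj_bindenv)
qed auto

lemma dwf_dia: "wf A \<Longrightarrow> inj (case_prod es) \<Longrightarrow> dwf (dia ev es A)"
proof (induction A arbitrary: es ev)
  case (Mu D ts)
  then show ?case
    using doccS_dia[of "length ts" 0 D "bindenv (length ts) es"]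
      dpolS_dia[of "length ts" 0 True D "bindenv (length ts) es"]
    by (simp add: inj_bindenv)
qed auto

lemma d_sub_dia:
  "ttr_sub Eq A B \<Longrightarrow> inj (case_prod es) \<Longrightarrow> d_sub (dia ev es A) (dia ev es B)"
proof (induction arbitrary: ev es rule: ttr_sub.induct)
  case (refl A)
  then show ?case by (simp add: d_sub.refl dwf_dia)
next
  case (allP_L n G A B)
  then have "dwf (dia ev es G)" "dwf (DAll (dia (bindenv n ev) es A))"
    using dwf_dia[of "AllP n A" es ev] by (auto simp: dwf_dia)
  with allP_L show ?case
    by (simp add: d_sub.all_L[where G = "dia ev es G"] dia_psub_substP1)
next
  case (allP_R n A B)
  then show ?case
    using allP_R.IH[of es "bindenv n ev"] by (simp add: d_sub.all_R dia_renP_liftR)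
next
  case (mu_fold D ts)
  then show ?case using dwf_dia[OF mu_fold.hyps]
    by (simp add: dia_unfold d_sub.mu_fold)
next
  case (mu_unfold D ts)
  then show ?case using dwf_dia[OF mu_unfold.hyps]
    by (simp add: dia_unfold d_sub.mu_unfold)
next
  case (mu_ind ts F D)
  then show ?case using dwf_dia[OF mu_ind.hyps(2)]
    by (simp add: d_sub.mu_ind dia_ssub_substS1)
next
  case (trans A B C)
  then show ?case by (meson d_sub.trans)
qed (auto intro: d_sub.arrow)

lemma d_ty_dia:
  "ttr_ty Eq \<Gamma> t A \<Longrightarrow> inj (case_prod es) \<Longrightarrow> d_ty (map (dia ev es) \<Gamma>) t (dia ev es A)"
proof (induction arbitrary: ev es rule: ttr_ty.induct)
  case (var i \<Gamma>)
  then show ?case using d_ty.var[of i "map (dia ev es) \<Gamma>"] by (simp add: dwf_dia)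
next
  case (app \<Gamma> t A B u)
  then show ?case by (auto intro: d_ty.app[where A = "dia ev es A"])
next
  case (allF_I \<Gamma> t A)
  then show ?case by (simp add: comp_def)
next
  case (allP_I n \<Gamma> t A)
  then show ?case
    using allP_I.IH[of es "bindenv n ev"] by (simp add: comp_def dia_renP_liftR d_ty.all_I)
next
  case (allP_E \<Gamma> t n A G)
  then show ?case by (simp add: d_ty.all_E dwf_dia dia_psub_substP1)
next
  case (sub \<Gamma> t A B)
  then show ?case by (auto intro: d_ty.sub d_sub_dia)
next
  case (Y n \<Gamma> t F D)
  have len: "length (args n) = n" by (simp add: args_def)
  have "d_ty (map (drenS Suc) (map (dia ev es) \<Gamma>)) t
     (DImp (DImp (DS 0) (drenS Suc (dia ev es F)))
           (DImp (dia ev (bindenv n es) D) (drenS Suc (dia ev es F))))"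
    using Y.IH[of "bindenv n es" ev] Y.prems
    by (simp add: comp_def dia_renS_liftR inj_bindenv args_def)
  moreover have "dwf (DMu (dia ev (bindenv n es) D))"
    using dwf_dia[OF Y.hyps(2) Y.prems] by (simp add: len)
  ultimately have "d_ty (map (dia ev es) \<Gamma>) (App TuringY t)
      (DImp (DMu (dia ev (bindenv n es) D)) (dia ev es F))"
    by (rule d_ty.Y)
  then show ?case by (simp add: len)
qed (simp_all add: d_ty.lam)

theorem theorem3p3:
  fixes Eq :: "(trm \<times> trm) set" and \<Gamma> :: "form list" and t :: lterm and A :: form
  assumes "ttr_ty Eq \<Gamma> t A"
  shows "d_ty (map diamond \<Gamma>) t (diamond A)"
proof -
  have "inj (case_prod (\<lambda>n k. prod_encode (n, k)))"
    by (simp add: inj_prod_encode)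
  from d_ty_dia[OF assms this] show ?thesis
    by (simp add: diamond_def[abs_def])
qed

end
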